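(* Let $G$ and $H$ be nontrivial finite groups such that the cyclic graph $\Delta(G\times H)$ is connected. Then $\mathrm{diam}(\Delta(G\times H))\le 7$.
   Context: For a finite group $X$, the cyclic graph $\Delta(X)$ has vertex set $X^{\#}=X\setminus\{1\}$, and distinct vertices $x,y$ are adjacent if and only if the subgroup $\langle x,y\rangle$ is cyclic. The diameter is the maximum graph distance between two vertices. *)

theory Defs
  imports "HOL-Algebra.Algebra"
begin

definition cyc_vertices :: "('a, 'b) monoid_scheme \<Rightarrow> 'a set" where
  "cyc_vertices G = carrier G - {\<one>\<^bsub>G\<^esub>}"

definition cyc_adj :: "('a, 'b) monoid_scheme \<Rightarrow> 'a \<Rightarrow> 'a \<Rightarrow> bool" where
  "cyc_adj G x y \<longleftrightarrow> x \<in> cyc_vertices G \<and> y \<in> cyc_vertices G \<and> x \<noteq> y \<and>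
     cyclic_group (subgroup_generated G {x, y})"

definition cyc_walk :: "('a, 'b) monoid_scheme \<Rightarrow> 'a list \<Rightarrow> bool" where
  "cyc_walk G ps \<longleftrightarrow> ps \<noteq> [] \<and> set ps \<subseteq> cyc_vertices G \<and>
     (\<forall>i. Suc i < length ps \<longrightarrow> cyc_adj G (ps ! i) (ps ! Suc i))"

definition cyc_connected :: "('a, 'b) monoid_scheme \<Rightarrow> bool" where
  "cyc_connected G \<longleftrightarrow> (\<forall>x\<in>cyc_vertices G. \<forall>y\<in>cyc_vertices G.
     \<exists>ps. cyc_walk G ps \<and> hd ps = x \<and> last ps = y)"

text \<open>Graph distance (number of edges of a shortest walk); meaningful when connected.\<close>
definition cyc_dist :: "('a, 'b) monoid_scheme \<Rightarrow> 'a \<Rightarrow> 'a \<Rightarrow> nat" where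
  "cyc_dist G x y = (LEAST n. \<exists>ps. cyc_walk G ps \<and> hd ps = x \<and> last ps = y \<and> length ps = Suc n)"

definition cyc_diam :: "('a, 'b) monoid_scheme \<Rightarrow> nat" where
  "cyc_diam G = Max {cyc_dist G x y | x y. x \<in> cyc_vertices G \<and> y \<in> cyc_vertices G}"

end

theory Submission
  imports Defs
begin

(* Every vertex is equal or adjacent to one of its powers of prime order, so it suffices to
   join any two elements of prime order by a walk of length at most 5.
   Let x have prime order p. If no element of another prime order commutes with x, then x lies in
   the cyclic subgroup generated by every vertex: along an edge u - v the group <u, v> is cyclic,
   its elements of prime order commute with x, so they all have order p, and a cyclic group has
   only one subgroup of order p. In G x H this fails for a vertex in the factor not containing x.
   Hence every element of prime order lies in G or H, or is adjacent to an element of G or H of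
   a different prime order. Elements of G and of H with distinct prime orders commute and are
   therefore adjacent; this gives distance at most 2 between prime-order elements of G and H,
   at most 3 between two of G except in one configuration where the bound 4 suffices, and
   altogether 1 + 5 + 1 = 7. *)

(* HOL-Algebra's Divisibility.prime would otherwise hide the primes of type nat. *)
hide_const (open) Divisibility.prime

definition cyc_within :: "('a, 'b) monoid_scheme \<Rightarrow> nat \<Rightarrow> 'a \<Rightarrow> 'a \<Rightarrow> bool" where
  "cyc_within M n x y \<longleftrightarrow>
     (\<exists>ps. cyc_walk M ps \<and> hd ps = x \<and> last ps = y \<and> length ps \<le> Suc n)"

lemma cyc_walk_Cons:
  "cyc_walk M (x # zs) \<longleftrightarrow>
     (if zs = [] then x \<in> cyc_vertices M else cyc_adj M x (hd zs) \<and> cyc_walk M zs)"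
proof (cases zs)
  case (Cons z zs')
  have "(\<forall>i. Suc i < length (x # zs) \<longrightarrow> cyc_adj M ((x # zs) ! i) ((x # zs) ! Suc i)) \<longleftrightarrow>
        cyc_adj M x z \<and> (\<forall>i. Suc i < length zs \<longrightarrow> cyc_adj M (zs ! i) (zs ! Suc i))"
    using Cons by (auto simp: less_Suc_eq_0_disj)
  moreover have "cyc_adj M x z \<Longrightarrow> x \<in> cyc_vertices M"
    by (simp add: cyc_adj_def)
  ultimately show ?thesis
    using Cons unfolding cyc_walk_def by auto
qed (simp add: cyc_walk_def)

lemma cyc_walk_append:
  "cyc_walk M (xs @ y # ys) \<longleftrightarrow> cyc_walk M (xs @ [y]) \<and> cyc_walk M (y # ys)"
proof (induction xs)
  case Nil
  have "cyc_walk M (y # ys) \<Longrightarrow> y \<in> cyc_vertices M"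
    by (simp add: cyc_walk_def)
  then show ?case
    by (auto simp: cyc_walk_Cons)
next
  case (Cons x xs)
  then show ?case
    by (cases xs) (simp_all add: cyc_walk_Cons)
qed

lemma cyc_adj_sym: "cyc_adj M x y \<Longrightarrow> cyc_adj M y x"
  unfolding cyc_adj_def by (auto simp: insert_commute)

lemma cyc_walk_rev: "cyc_walk M ps \<Longrightarrow> cyc_walk M (rev ps)"
proof (induction ps)
  case (Cons x zs)
  show ?case
  proof (cases zs)
    case (Cons z zs')
    then have walk: "cyc_walk M (z # zs')" and adj: "cyc_adj M x z"
      using Cons.prems by (simp_all add: cyc_walk_Cons)
    have "cyc_walk M (rev zs' @ [z])"
      using Cons.IH walk Cons by simp
    moreover have "cyc_walk M [z, x]"
      using adj by (simp add: cyc_walk_Cons cyc_adj_sym) (simp add: cyc_adj_def)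
    ultimately show ?thesis
      using Cons cyc_walk_append[of M "rev zs'" z "[x]"] by simp
  qed (use Cons.prems in simp)
qed (simp add: cyc_walk_def)

lemma cyc_within_refl: "x \<in> cyc_vertices M \<Longrightarrow> cyc_within M n x x"
  unfolding cyc_within_def by (intro exI[of _ "[x]"]) (simp add: cyc_walk_Cons)

lemma cyc_within_adj: "cyc_adj M x y \<Longrightarrow> cyc_within M 1 x y"
  unfolding cyc_within_def
  by (intro exI[of _ "[x, y]"]) (simp add: cyc_walk_Cons cyc_adj_def)

lemma cyc_within_mono: "cyc_within M m x y \<Longrightarrow> m \<le> n \<Longrightarrow> cyc_within M n x y"
  unfolding cyc_within_def by fastforce

lemma cyc_within_sym: "cyc_within M n x y \<Longrightarrow> cyc_within M n y x"
  unfolding cyc_within_def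
  by (metis cyc_walk_rev hd_rev last_rev length_rev)

lemma cyc_within_trans:
  assumes "cyc_within M m x y" "cyc_within M n y z"
  shows "cyc_within M (m + n) x z"
proof -
  obtain ps where ps: "cyc_walk M ps" "hd ps = x" "last ps = y" "length ps \<le> Suc m"
    using assms(1) unfolding cyc_within_def by blast
  obtain qs where qs: "cyc_walk M qs" "hd qs = y" "last qs = z" "length qs \<le> Suc n"
    using assms(2) unfolding cyc_within_def by blast
  have "ps \<noteq> []" "qs \<noteq> []"
    using ps(1) qs(1) by (simp_all add: cyc_walk_def)
  then have ps_eq: "ps = butlast ps @ [y]" and qs_eq: "qs = y # tl qs"
    using ps(3) qs(2) by (metis append_butlast_last_id, metis list.collapse)
  let ?rs = "butlast ps @ y # tl qs"
  have "cyc_walk M ?rs"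
    using ps(1) qs(1) ps_eq qs_eq cyc_walk_append[of M "butlast ps" y "tl qs"] by simp
  moreover have "hd ?rs = x"
    using ps(2) ps_eq by (metis hd_append list.sel(1))
  moreover have "last ?rs = z"
    using qs(3) qs_eq by (metis last_appendR list.distinct(1))
  moreover have "length ?rs \<le> Suc (m + n)"
    using ps(4) qs(4) \<open>ps \<noteq> []\<close> \<open>qs \<noteq> []\<close> by (cases ps; cases qs) auto
  ultimately show ?thesis
    unfolding cyc_within_def by blast
qed

lemma cyc_dist_le_if_within: "cyc_within M n x y \<Longrightarrow> cyc_dist M x y \<le> n"
proof -
  assume "cyc_within M n x y"
  then obtain ps where ps: "cyc_walk M ps" "hd ps = x" "last ps = y" "length ps \<le> Suc n"
    unfolding cyc_within_def by blast
  then obtain k where k: "length ps = Suc k"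
    by (cases ps) (simp_all add: cyc_walk_def)
  with ps(1-3) have "cyc_dist M x y \<le> k"
    unfolding cyc_dist_def by (intro Least_le exI[of _ ps]) simp
  with ps(4) k show ?thesis
    by simp
qed

lemma cyc_diam_le_if_within:
  assumes "cyc_vertices M \<noteq> {}"
    and "\<And>x y. x \<in> cyc_vertices M \<Longrightarrow> y \<in> cyc_vertices M \<Longrightarrow> cyc_within M n x y"
  shows "cyc_diam M \<le> n"
proof -
  let ?D = "{cyc_dist M x y | x y. x \<in> cyc_vertices M \<and> y \<in> cyc_vertices M}"
  have bounded: "d \<le> n" if "d \<in> ?D" for d
    using that by (auto intro: cyc_dist_le_if_within assms(2))
  then have "finite ?D"
    by (meson atMost_iff finite_atMost finite_subset subsetI)
  moreover have "?D \<noteq> {}"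
    using assms(1) by blast
  ultimately show ?thesis
    unfolding cyc_diam_def using bounded by (rule Max.boundedI)
qed

lemma gcd_mult_prime_eq:
  fixes m k p :: nat
  assumes p: "prime p" and "m dvd k * p" "\<not> m dvd k"
  shows "gcd k m * p = m"
proof -
  have "m \<noteq> 0"
    using assms prime_gt_0_nat by (metis dvd_0_left_iff mult_is_0 dvd_refl gr_implies_not0)
  have "m dvd gcd (k * p) (m * p)"
    using assms(2) by simp
  then have "m dvd gcd k m * p"
    by (simp add: gcd_mult_distrib_nat mult.commute)
  moreover obtain d where d: "m = gcd k m * d"
    by (metis dvdE gcd_dvd2)
  ultimately have "gcd k m * d dvd gcd k m * p"
    by simp
  then have "d dvd p"
    using \<open>m \<noteq> 0\<close> by simp
  moreover have "d \<noteq> 1"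
    using d assms(3) by (metis gcd_dvd1 mult.right_neutral)
  ultimately have "d = p"
    using p by (metis prime_nat_iff)
  with d show ?thesis
    by simp
qed

context group
begin

lemma nat_pow_mem_subgroup:
  assumes "subgroup H G" "h \<in> H"
  shows "h [^] (n::nat) \<in> H"
  using subgroup_int_pow_closed[OF assms, of "int n"] by (simp add: int_pow_int)

lemma nat_pow_mem_generate: "a \<in> carrier G \<Longrightarrow> a [^] (n::nat) \<in> generate G {a}"
  by (rule nat_pow_mem_subgroup[OF generate_is_subgroup]) (auto intro: generate.incl)

lemma generate_singleton_commute:
  assumes "c \<in> carrier G" "a \<in> generate G {c}" "b \<in> generate G {c}"
  shows "a \<otimes> b = b \<otimes> a"
proof -
  obtain i j :: int where "a = c [^] i" "b = c [^] j"
    using assms generate_pow by blast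
  then show ?thesis
    using assms(1) by (simp add: int_pow_mult[symmetric] add.commute)
qed

lemma cyc_vertex_if_prime_ord: "u \<in> carrier G \<Longrightarrow> prime (ord u) \<Longrightarrow> u \<in> cyc_vertices G"
  by (auto simp: cyc_vertices_def)

lemma cyclic_subgroup_generated_iff:
  assumes "S \<subseteq> carrier G"
  shows "cyclic_group (subgroup_generated G S) \<longleftrightarrow> (\<exists>c\<in>carrier G. generate G S = generate G {c})"
proof
  assume "cyclic_group (subgroup_generated G S)"
  then obtain c where c: "c \<in> carrier (subgroup_generated G S)"
    and gen: "carrier (subgroup_generated G S) = range (\<lambda>n::int. c [^]\<^bsub>subgroup_generated G S\<^esub> n)"
    using group.cyclic_group[OF group_subgroup_generated] by blast
  have cG: "c \<in> carrier G"
    using c carrier_subgroup_generated_subset by blast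
  have "generate G S = range (\<lambda>n::int. c [^] n)"
    using gen assms int_pow_subgroup_generated[OF c] by (simp add: carrier_subgroup_generated Int_absorb1)
  also have "\<dots> = generate G {c}"
    using carrier_subgroup_generated_by_singleton[OF cG] cG by (simp add: carrier_subgroup_generated)
  finally show "\<exists>c\<in>carrier G. generate G S = generate G {c}"
    using cG by blast
next
  assume "\<exists>c\<in>carrier G. generate G S = generate G {c}"
  then obtain c where "c \<in> carrier G" "generate G S = generate G {c}"
    by blast
  then have "subgroup_generated G S = subgroup_generated G {c}"
    using assms by (simp add: subgroup_generated_def Int_absorb1)
  then show "cyclic_group (subgroup_generated G S)"
    by (simp add: cyclic_group_generated)
qed

lemma cyc_adj_iff:
  "cyc_adj G u v \<longleftrightarrow> u \<in> cyc_vertices G \<and> v \<in> cyc_vertices G \<and> u \<noteq> v \<and>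
     (\<exists>c\<in>carrier G. generate G {u, v} = generate G {c})"
  unfolding cyc_adj_def using cyclic_subgroup_generated_iff[of "{u, v}"]
  by (auto simp: cyc_vertices_def)

lemma cyc_adj_pow:
  assumes u: "u \<in> cyc_vertices G" and "u [^] (k::nat) \<noteq> \<one>" "u [^] k \<noteq> u"
  shows "cyc_adj G u (u [^] k)"
proof -
  have uG: "u \<in> carrier G"
    using u by (simp add: cyc_vertices_def)
  have "generate G {u, u [^] k} = generate G {u}"
  proof
    show "generate G {u, u [^] k} \<subseteq> generate G {u}"
      using uG nat_pow_mem_generate[OF uG]
      by (intro generate_subgroup_incl) (auto intro: generate.incl generate_is_subgroup)
    show "generate G {u} \<subseteq> generate G {u, u [^] k}"
      by (rule mono_generate) simp
  qed
  then show ?thesis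
    using assms uG by (auto simp: cyc_adj_iff cyc_vertices_def)
qed

lemma mem_generate_mult_if_coprime:
  assumes "u \<in> carrier G" "v \<in> carrier G" "u \<otimes> v = v \<otimes> u"
    and "coprime (ord u) (ord v)" "ord v \<noteq> 0"
  shows "u \<in> generate G {u \<otimes> v}"
proof -
  obtain s t where st: "ord v * s = ord u * t + 1"
    using bezout_nat[OF assms(5), of "ord u"] assms(4) by (metis coprime_iff_gcd_eq_1 gcd.commute)
  have "(u \<otimes> v) [^] (ord v * s) = u [^] (ord v * s) \<otimes> v [^] (ord v * s)"
    by (rule pow_mult_distrib[OF assms(3,1,2)])
  also have "v [^] (ord v * s) = \<one>"
    using assms(2) by (simp add: pow_eq_id)
  also have "u [^] (ord v * s) = u [^] (ord u * t) \<otimes> u"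
    using assms(1) st by (simp add: nat_pow_mult[symmetric])
  also have "u [^] (ord u * t) = \<one>"
    using assms(1) by (simp add: pow_eq_id)
  finally have "(u \<otimes> v) [^] (ord v * s) = u"
    using assms(1) by simp
  then show ?thesis
    using nat_pow_mem_generate[of "u \<otimes> v" "ord v * s"] assms(1,2) by simp
qed

lemma cyc_adj_if_commute_coprime:
  assumes u: "u \<in> cyc_vertices G" and v: "v \<in> cyc_vertices G"
    and comm: "u \<otimes> v = v \<otimes> u" and cop: "coprime (ord u) (ord v)"
  shows "cyc_adj G u v"
proof -
  have uG: "u \<in> carrier G" "u \<noteq> \<one>" and vG: "v \<in> carrier G" "v \<noteq> \<one>"
    using u v by (auto simp: cyc_vertices_def)
  then have "ord u \<noteq> 1" "ord v \<noteq> 1"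
    using ord_eq_1 by auto
  then have ord_nz: "ord u \<noteq> 0" "ord v \<noteq> 0" and "u \<noteq> v"
    using cop by (cases "ord u = 0"; cases "ord v = 0"; auto)+
  have "generate G {u, v} = generate G {u \<otimes> v}"
  proof
    have "u \<in> generate G {u \<otimes> v}"
      using mem_generate_mult_if_coprime uG vG comm cop ord_nz by blast
    moreover have "v \<in> generate G {u \<otimes> v}"
      using mem_generate_mult_if_coprime[of v u] uG vG comm cop ord_nz
      by (simp add: coprime_commute)
    ultimately show "generate G {u, v} \<subseteq> generate G {u \<otimes> v}"
      using uG vG by (intro generate_subgroup_incl) (auto intro: generate_is_subgroup)
    have "u \<otimes> v \<in> generate G {u, v}"
      by (intro generate.eng generate.incl) auto
    then show "generate G {u \<otimes> v} \<subseteq> generate G {u, v}"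
      using uG vG by (intro generate_subgroup_incl) (auto intro: generate_is_subgroup)
  qed
  then show ?thesis
    using u v \<open>u \<noteq> v\<close> uG vG by (auto simp: cyc_adj_iff)
qed

lemma cyc_adj_if_commute_prime_ord:
  assumes "u \<in> carrier G" "v \<in> carrier G" "u \<otimes> v = v \<otimes> u"
    and "prime (ord u)" "prime (ord v)" "ord u \<noteq> ord v"
  shows "cyc_adj G u v"
  using assms by (intro cyc_adj_if_commute_coprime cyc_vertex_if_prime_ord primes_coprime)

lemma exists_prime_ord_pow:
  assumes "finite (carrier G)" "v \<in> carrier G" "v \<noteq> \<one>"
  shows "\<exists>k::nat. prime (ord (v [^] k))"
proof -
  have "ord v \<noteq> 1" "ord v \<noteq> 0"
    using assms ord_eq_1 ord_ge_1 by fastforce+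
  then obtain p where p: "prime p" "p dvd ord v"
    using prime_factor_nat by blast
  then obtain k where k: "ord v = p * k"
    by (elim dvdE)
  then have "k dvd ord v" "k \<noteq> 0"
    using \<open>ord v \<noteq> 0\<close> by auto
  then have "ord (v [^] k) = p"
    using ord_pow[OF assms(2)] k by simp
  with p show ?thesis
    by blast
qed

lemma pow_mem_generate_pow_if_gcd_dvd:
  assumes c: "c \<in> carrier G" and dvd: "gcd k (ord c) dvd i"
  shows "c [^] (i::nat) \<in> generate G {c [^] (k::nat)}"
proof (cases "k = 0")
  case True
  then have "c [^] i = \<one>"
    using c dvd by (simp add: pow_eq_id)
  then show ?thesis
    by (simp add: generate.one)
next
  case False
  obtain s y where bez: "k * s = ord c * y + gcd k (ord c)"
    using bezout_nat[OF False] by blast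
  obtain t where t: "i = gcd k (ord c) * t"
    using dvd by (elim dvdE)
  have "k * (s * t) = ord c * (y * t) + i"
    unfolding t mult.assoc[symmetric] bez by (simp add: algebra_simps)
  then have "(c [^] k) [^] (s * t) = c [^] (ord c * (y * t)) \<otimes> c [^] i"
    using c by (simp add: nat_pow_pow nat_pow_mult)
  also have "c [^] (ord c * (y * t)) = \<one>"
    using c by (simp add: pow_eq_id)
  finally have "(c [^] k) [^] (s * t) = c [^] i"
    using c by simp
  then show ?thesis
    using nat_pow_mem_generate[of "c [^] k" "s * t"] c by simp
qed

lemma mem_generate_if_same_prime_ord:
  assumes fin: "finite (carrier G)" and c: "c \<in> carrier G"
    and x: "x \<in> generate G {c}" "prime (ord x)" and y: "y \<in> generate G {c}" "ord y = ord x"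
  shows "x \<in> generate G {y}"
proof -
  obtain i :: nat where i: "x = c [^] i"
    using x(1) generate_pow_on_finite_carrier[OF fin c] by blast
  obtain k :: nat where k: "y = c [^] k"
    using y(1) generate_pow_on_finite_carrier[OF fin c] by blast
  have "c [^] (i * ord x) = \<one>" "c [^] (k * ord x) = \<one>"
    using i k y(2) c by (metis nat_pow_closed nat_pow_pow pow_ord_eq_1)+
  then have "ord c dvd i * ord x" "ord c dvd k * ord x"
    using c by (simp_all add: pow_eq_id)
  moreover have "\<not> ord c dvd k"
    using k y(2) x(2) c by (metis ord_id not_prime_1 pow_eq_id)
  ultimately have "gcd k (ord c) * ord x dvd i * ord x"
    using gcd_mult_prime_eq[OF x(2)] by simp
  then have "gcd k (ord c) dvd i"
    using x(2) by (simp add: prime_gt_0_nat)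
  then show ?thesis
    using pow_mem_generate_pow_if_gcd_dvd[OF c] i k by simp
qed

lemma exists_prime_ord_in_subgroup:
  assumes "finite (carrier G)" "subgroup S G" "S \<noteq> {\<one>}"
  shows "\<exists>s\<in>S. prime (ord s)"
proof -
  have "\<one> \<in> S"
    using assms(2) by (rule subgroup.one_closed)
  with assms(3) obtain v where v: "v \<in> S" "v \<noteq> \<one>"
    by blast
  have "v \<in> carrier G"
    using assms(2) v(1) by (rule subgroup.mem_carrier)
  then obtain k :: nat where "prime (ord (v [^] k))"
    using exists_prime_ord_pow[OF assms(1)] v(2) by blast
  moreover have "v [^] k \<in> S"
    using assms(2) v(1) by (rule nat_pow_mem_subgroup)
  ultimately show ?thesis
    by blast
qed

lemma exists_prime_ord_within_1:
  assumes "finite (carrier G)" "v \<in> cyc_vertices G"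
  shows "\<exists>x\<in>carrier G. prime (ord x) \<and> cyc_within G 1 v x"
proof -
  have v: "v \<in> carrier G" "v \<noteq> \<one>"
    using assms(2) by (auto simp: cyc_vertices_def)
  obtain k :: nat where k: "prime (ord (v [^] k))"
    using exists_prime_ord_pow[OF assms(1) v] by blast
  then have "v [^] k \<noteq> \<one>"
    by (metis ord_id not_prime_1)
  have "cyc_within G 1 v (v [^] k)"
  proof (cases "v [^] k = v")
    case False
    with assms(2) \<open>v [^] k \<noteq> \<one>\<close> show ?thesis
      by (intro cyc_within_adj cyc_adj_pow) simp_all
  qed (simp add: assms(2) cyc_within_refl)
  with k v(1) show ?thesis
    by blast
qed

lemma mem_generate_across_cyc_adj:
  assumes fin: "finite (carrier G)" and adj: "cyc_adj G u v"
    and x: "x \<in> generate G {u}" "prime (ord x)"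
    and isolated: "\<And>z. z \<in> carrier G \<Longrightarrow> prime (ord z) \<Longrightarrow> z \<otimes> x = x \<otimes> z \<Longrightarrow> ord z = ord x"
  shows "x \<in> generate G {v}"
proof -
  obtain c where c: "c \<in> carrier G" "generate G {u, v} = generate G {c}"
    and u: "u \<in> cyc_vertices G" and v: "v \<in> cyc_vertices G"
    using adj by (auto simp: cyc_adj_iff)
  have vG: "v \<in> carrier G" "v \<noteq> \<one>"
    using v by (auto simp: cyc_vertices_def)
  obtain k :: nat where y: "prime (ord (v [^] k))"
    using exists_prime_ord_pow[OF fin vG] by blast
  have y_gen: "v [^] k \<in> generate G {v}"
    by (rule nat_pow_mem_generate[OF vG(1)])
  have "generate G {u} \<subseteq> generate G {c}" "generate G {v} \<subseteq> generate G {c}"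
    using mono_generate[of "{u}" "{u, v}"] mono_generate[of "{v}" "{u, v}"] c(2) by auto
  then have in_c: "x \<in> generate G {c}" "v [^] k \<in> generate G {c}"
    using x(1) y_gen by auto
  then have "v [^] k \<otimes> x = x \<otimes> v [^] k"
    using generate_singleton_commute[OF c(1)] by blast
  then have "ord (v [^] k) = ord x"
    using vG(1) y by (intro isolated) simp_all
  then have "x \<in> generate G {v [^] k}"
    using mem_generate_if_same_prime_ord[OF fin c(1) in_c(1) x(2) in_c(2)] by simp
  also have "generate G {v [^] k} \<subseteq> generate G {v}"
    using y_gen vG by (intro generate_subgroup_incl) (auto intro: generate_is_subgroup)
  finally show ?thesis .
qed

lemma mem_generate_along_cyc_walk:
  assumes fin: "finite (carrier G)" and "cyc_walk G ps" "x \<in> generate G {hd ps}"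
    and x: "prime (ord x)"
    and isolated: "\<And>z. z \<in> carrier G \<Longrightarrow> prime (ord z) \<Longrightarrow> z \<otimes> x = x \<otimes> z \<Longrightarrow> ord z = ord x"
  shows "x \<in> generate G {last ps}"
  using assms(2,3)
proof (induction ps)
  case (Cons u zs)
  show ?case
  proof (cases "zs = []")
    case False
    then have adj: "cyc_adj G u (hd zs)" and walk: "cyc_walk G zs"
      using Cons.prems(1) by (simp_all add: cyc_walk_Cons)
    have "x \<in> generate G {u}"
      using Cons.prems(2) by simp
    then have "x \<in> generate G {hd zs}"
      by (rule mem_generate_across_cyc_adj[OF fin adj _ x isolated])
    then have "x \<in> generate G {last zs}"
      by (rule Cons.IH[OF walk])
    with False show ?thesis
      by simp
  qed (use Cons.prems in simp)
qed (simp add: cyc_walk_def)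

lemma exists_commuting_prime_ord:
  assumes fin: "finite (carrier G)" and conn: "cyc_connected G"
    and x: "x \<in> carrier G" "prime (ord x)" and y: "y \<in> cyc_vertices G" "x \<notin> generate G {y}"
  shows "\<exists>z\<in>carrier G. prime (ord z) \<and> ord z \<noteq> ord x \<and> z \<otimes> x = x \<otimes> z"
proof (rule ccontr)
  assume "\<not> ?thesis"
  then have isolated: "\<And>z. z \<in> carrier G \<Longrightarrow> prime (ord z) \<Longrightarrow> z \<otimes> x = x \<otimes> z \<Longrightarrow> ord z = ord x"
    by blast
  have "x \<in> cyc_vertices G"
    using x by (rule cyc_vertex_if_prime_ord)
  then obtain ps where ps: "cyc_walk G ps" "hd ps = x" "last ps = y"
    using conn y(1) unfolding cyc_connected_def by blast
  have "x \<in> generate G {hd ps}"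
    using ps(2) by (simp add: generate.incl)
  then have "x \<in> generate G {last ps}"
    by (rule mem_generate_along_cyc_walk[OF fin ps(1) _ x(2) isolated])
  with ps(3) y(2) show False
    by simp
qed

end

locale internal_direct_product = group +
  fixes K L :: "'a set"
  assumes subgroup_K: "subgroup K G" and subgroup_L: "subgroup L G"
    and K_L_commute: "\<lbrakk>k \<in> K; l \<in> L\<rbrakk> \<Longrightarrow> k \<otimes> l = l \<otimes> k"
    and K_inter_L: "K \<inter> L = {\<one>}"
    and decompose: "x \<in> carrier G \<Longrightarrow> \<exists>k\<in>K. \<exists>l\<in>L. x = k \<otimes> l"
begin

lemma internal_direct_product_swap: "internal_direct_product G L K"
proof (intro internal_direct_product.intro internal_direct_product_axioms.intro)
  show "group G" "subgroup L G" "subgroup K G"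
    by (fact is_group subgroup_L subgroup_K)+
  show "L \<inter> K = {\<one>}"
    using K_inter_L by blast
  show "l \<otimes> k = k \<otimes> l" if "l \<in> L" "k \<in> K" for l k
    using K_L_commute[OF that(2,1)] by (rule sym)
  fix x assume "x \<in> carrier G"
  then obtain k l where kl: "k \<in> K" "l \<in> L" "x = k \<otimes> l"
    using decompose by blast
  then have "x = l \<otimes> k"
    using K_L_commute[OF kl(1,2)] by simp
  with kl(1,2) show "\<exists>l\<in>L. \<exists>k\<in>K. x = l \<otimes> k"
    by blast
qed

lemma K_carrier: "k \<in> K \<Longrightarrow> k \<in> carrier G"
  using subgroup_K by (rule subgroup.mem_carrier)

lemma L_carrier: "l \<in> L \<Longrightarrow> l \<in> carrier G"
  using subgroup_L by (rule subgroup.mem_carrier)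

lemma one_in_K: "\<one> \<in> K" and one_in_L: "\<one> \<in> L"
  using K_inter_L by blast+

lemma decompose_unique:
  assumes k: "k \<in> K" "k' \<in> K" and l: "l \<in> L" "l' \<in> L" and eq: "k \<otimes> l = k' \<otimes> l'"
  shows "k = k' \<and> l = l'"
proof -
  have G: "k \<in> carrier G" "k' \<in> carrier G" "l \<in> carrier G" "l' \<in> carrier G"
    using k l K_carrier L_carrier by auto
  have "inv k' \<otimes> k = inv k' \<otimes> ((k \<otimes> l) \<otimes> inv l)"
    using G by (simp add: m_assoc)
  also have "\<dots> = l' \<otimes> inv l"
    using G eq by (simp add: m_assoc[symmetric])
  finally have "inv k' \<otimes> k = l' \<otimes> inv l" .
  moreover have "inv k' \<otimes> k \<in> K" "l' \<otimes> inv l \<in> L"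
    using k l subgroup_K subgroup_L by (simp_all add: subgroup.m_closed subgroup.m_inv_closed)
  ultimately have "inv k' \<otimes> k \<in> K \<inter> L" "l' \<otimes> inv l \<in> K \<inter> L"
    by simp_all
  then have "inv k' \<otimes> k = \<one>" "l' \<otimes> inv l = \<one>"
    unfolding K_inter_L by simp_all
  then show ?thesis
    using l_cancel[of "inv k'" k k'] right_cancel[of "inv l" l' l] G by simp
qed

lemma pow_mult_eq_one_iff:
  assumes "k \<in> K" "l \<in> L"
  shows "(k \<otimes> l) [^] (n::nat) = \<one> \<longleftrightarrow> k [^] n = \<one> \<and> l [^] n = \<one>"
proof -
  have "(k \<otimes> l) [^] n = k [^] n \<otimes> l [^] n"
    using K_L_commute[OF assms] K_carrier[OF assms(1)] L_carrier[OF assms(2)]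
    by (rule pow_mult_distrib)
  moreover have "k [^] n \<in> K" "l [^] n \<in> L"
    using assms subgroup_K subgroup_L by (simp_all add: nat_pow_mem_subgroup)
  then have "k [^] n \<otimes> l [^] n = \<one> \<otimes> \<one> \<Longrightarrow> k [^] n = \<one> \<and> l [^] n = \<one>"
    using one_in_K one_in_L by (intro decompose_unique) simp_all
  ultimately show ?thesis
    by auto
qed

lemma ord_mult_eq_lcm:
  assumes "k \<in> K" "l \<in> L"
  shows "ord (k \<otimes> l) = lcm (ord k) (ord l)"
proof -
  have G: "k \<in> carrier G" "l \<in> carrier G"
    using assms K_carrier L_carrier by auto
  have "(k \<otimes> l) [^] n = \<one> \<longleftrightarrow> lcm (ord k) (ord l) dvd n" for n :: nat
    by (simp add: pow_mult_eq_one_iff[OF assms] pow_eq_id[OF G(1)] pow_eq_id[OF G(2)])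
  then show ?thesis
    using G by (simp add: ord_unique)
qed

lemma ord_component_eq_if_prime:
  assumes "k \<in> K" "l \<in> L" "prime (ord (k \<otimes> l))" "k \<noteq> \<one>"
  shows "ord k = ord (k \<otimes> l)"
proof -
  have "ord k dvd ord (k \<otimes> l)"
    using assms(1,2) by (simp add: ord_mult_eq_lcm)
  moreover have "ord k \<noteq> 1"
    using assms(1,4) K_carrier ord_eq_1 by blast
  ultimately show ?thesis
    using assms(3) by (metis prime_nat_iff)
qed

lemma commute_component:
  assumes k: "k \<in> K" "k' \<in> K" and l: "l \<in> L" "l' \<in> L"
    and comm: "(k' \<otimes> l') \<otimes> (k \<otimes> l) = (k \<otimes> l) \<otimes> (k' \<otimes> l')"
  shows "k' \<otimes> k = k \<otimes> k'"
proof -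
  have G: "k \<in> carrier G" "k' \<in> carrier G" "l \<in> carrier G" "l' \<in> carrier G"
    using k l K_carrier L_carrier by auto
  have regroup: "(a \<otimes> b) \<otimes> (c \<otimes> d) = (a \<otimes> c) \<otimes> (b \<otimes> d)"
    if "a \<in> K" "c \<in> K" "b \<in> L" "d \<in> L" for a b c d
  proof -
    have "(a \<otimes> b) \<otimes> (c \<otimes> d) = a \<otimes> ((b \<otimes> c) \<otimes> d)"
      using that K_carrier L_carrier by (simp add: m_assoc)
    also have "\<dots> = a \<otimes> ((c \<otimes> b) \<otimes> d)"
      using K_L_commute[OF that(2,3)] by simp
    also have "\<dots> = (a \<otimes> c) \<otimes> (b \<otimes> d)"
      using that K_carrier L_carrier by (simp add: m_assoc)
    finally show ?thesis .
  qed
  have "(k' \<otimes> k) \<otimes> (l' \<otimes> l) = (k' \<otimes> l') \<otimes> (k \<otimes> l)"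
    using regroup[OF k(2,1) l(2,1)] by (rule sym)
  also have "\<dots> = (k \<otimes> l) \<otimes> (k' \<otimes> l')"
    by (rule comm)
  also have "\<dots> = (k \<otimes> k') \<otimes> (l \<otimes> l')"
    by (rule regroup[OF k l])
  finally have "(k' \<otimes> k) \<otimes> (l' \<otimes> l) = (k \<otimes> k') \<otimes> (l \<otimes> l')" .
  moreover have "k' \<otimes> k \<in> K" "k \<otimes> k' \<in> K" "l' \<otimes> l \<in> L" "l \<otimes> l' \<in> L"
    using k l subgroup_K subgroup_L by (simp_all add: subgroup.m_closed)
  ultimately show ?thesis
    using decompose_unique by blast
qed

end

locale connected_internal_direct_product = internal_direct_product +
  assumes finite_carrier: "finite (carrier G)"
    and K_nontrivial: "K \<noteq> {\<one>}" and L_nontrivial: "L \<noteq> {\<one>}"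
    and connected: "cyc_connected G"
begin

lemma connected_internal_direct_product_swap: "connected_internal_direct_product G L K"
  unfolding connected_internal_direct_product_def connected_internal_direct_product_axioms_def
  using internal_direct_product_swap finite_carrier K_nontrivial L_nontrivial connected by simp

lemma K_L_adj:
  assumes "k \<in> K" "l \<in> L" "prime (ord k)" "prime (ord l)" "ord k \<noteq> ord l"
  shows "cyc_adj G k l"
  using K_carrier[OF assms(1)] L_carrier[OF assms(2)] K_L_commute[OF assms(1,2)] assms(3-5)
  by (rule cyc_adj_if_commute_prime_ord)

lemma exists_vertex_not_generating:
  assumes "x \<in> carrier G" "x \<noteq> \<one>"
  shows "\<exists>y\<in>cyc_vertices G. x \<notin> generate G {y}"
proof -
  have avoid: "\<exists>y\<in>cyc_vertices G. x \<notin> generate G {y}"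
    if S: "subgroup S G" "S \<noteq> {\<one>}" and "x \<notin> S" for S
  proof -
    have "\<one> \<in> S"
      using S(1) by (rule subgroup.one_closed)
    with S(2) obtain y where y: "y \<in> S" "y \<noteq> \<one>"
      by blast
    have "y \<in> carrier G"
      using S(1) y(1) by (rule subgroup.mem_carrier)
    with y(2) have "y \<in> cyc_vertices G"
      by (simp add: cyc_vertices_def)
    moreover have "generate G {y} \<subseteq> S"
      using S(1) y(1) by (intro generate_subgroup_incl) simp_all
    ultimately show ?thesis
      using \<open>x \<notin> S\<close> by blast
  qed
  have "x \<notin> K \<or> x \<notin> L"
    using assms(2) K_inter_L by blast
  then show ?thesis
    using avoid subgroup_K subgroup_L K_nontrivial L_nontrivial by blast
qed

lemma exists_commuting_prime_ord_in_K_or_L: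
  assumes k: "k \<in> K" and l: "l \<in> L" and x: "prime (ord (k \<otimes> l))"
  shows "\<exists>z\<in>K \<union> L. prime (ord z) \<and> ord z \<noteq> ord (k \<otimes> l) \<and> z \<otimes> k = k \<otimes> z \<and> z \<otimes> l = l \<otimes> z"
proof -
  have xG: "k \<otimes> l \<in> carrier G"
    using K_carrier[OF k] L_carrier[OF l] by simp
  have "k \<otimes> l \<noteq> \<one>"
    using x by (metis ord_id not_prime_1)
  then obtain y where y: "y \<in> cyc_vertices G" "k \<otimes> l \<notin> generate G {y}"
    using exists_vertex_not_generating[OF xG] by blast
  obtain z where z: "z \<in> carrier G" "prime (ord z)" "ord z \<noteq> ord (k \<otimes> l)"
    and comm: "z \<otimes> (k \<otimes> l) = (k \<otimes> l) \<otimes> z"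
    using exists_commuting_prime_ord[OF finite_carrier connected xG x y] by blast
  obtain k' l' where k': "k' \<in> K" and l': "l' \<in> L" and z_eq: "z = k' \<otimes> l'"
    using decompose[OF z(1)] by blast
  have "k' \<otimes> k = k \<otimes> k'"
    using commute_component[OF k k' l l'] comm z_eq by simp
  moreover have "l' \<otimes> l = l \<otimes> l'"
    using internal_direct_product.commute_component[OF internal_direct_product_swap l l' k k']
      comm z_eq K_L_commute[OF k l] K_L_commute[OF k' l'] by simp
  moreover have "k' \<noteq> \<one> \<or> l' \<noteq> \<one>"
    using z(2) z_eq by (metis l_one one_closed ord_id not_prime_1)
  moreover have "ord k' = ord z" if "k' \<noteq> \<one>"
    using ord_component_eq_if_prime[OF k' l'] z(2) z_eq that by simp
  moreover have "ord l' = ord z" if "l' \<noteq> \<one>"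
    using internal_direct_product.ord_component_eq_if_prime[OF internal_direct_product_swap l' k']
      z(2) z_eq K_L_commute[OF k' l'] that by simp
  moreover have "k' \<otimes> l = l \<otimes> k'" "l' \<otimes> k = k \<otimes> l'"
    using K_L_commute[OF k' l] K_L_commute[OF k l'] by simp_all
  ultimately show ?thesis
    using k' l' z(2,3) by (metis UnI1 UnI2)
qed

lemma K_L_cyc_within_2:
  assumes k: "k \<in> K" "prime (ord k)" and l: "l \<in> L" "prime (ord l)"
  shows "cyc_within G 2 k l"
proof (cases "ord k = ord l")
  case False
  then have "cyc_within G 1 k l"
    using K_L_adj[OF k(1) l(1) k(2) l(2)] by (intro cyc_within_adj)
  then show ?thesis
    by (rule cyc_within_mono) simp
next
  case True
  then have ord_kl: "ord (k \<otimes> l) = ord k"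
    using k l by (simp add: ord_mult_eq_lcm)
  then obtain z where z: "z \<in> K \<union> L" "prime (ord z)" "ord z \<noteq> ord k"
    and comm: "z \<otimes> k = k \<otimes> z" "z \<otimes> l = l \<otimes> z"
    using exists_commuting_prime_ord_in_K_or_L[OF k(1) l(1)] k(2) by auto
  have zG: "z \<in> carrier G"
    using z(1) K_carrier L_carrier by auto
  have "cyc_adj G k z"
    using K_carrier[OF k(1)] zG comm(1)[symmetric] k(2) z(2) z(3)[symmetric]
    by (rule cyc_adj_if_commute_prime_ord)
  moreover have "cyc_adj G z l"
    using zG L_carrier[OF l(1)] comm(2) z(2) l(2) z(3)[unfolded True]
    by (rule cyc_adj_if_commute_prime_ord)
  ultimately have "cyc_within G (1 + 1) k l"
    by (intro cyc_within_trans cyc_within_adj)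
  then show ?thesis
    by (simp add: eval_nat_numeral)
qed

lemma K_cyc_within_3:
  assumes k1: "k1 \<in> K" "prime (ord k1)" and k2: "k2 \<in> K" "prime (ord k2)"
    and non_exceptional: "ord k1 \<noteq> ord k2 \<or> (\<exists>l\<in>L. prime (ord l) \<and> ord l \<noteq> ord k1)"
  shows "cyc_within G 3 k1 k2"
proof (cases "\<exists>l\<in>L. prime (ord l) \<and> ord l \<noteq> ord k1 \<and> ord l \<noteq> ord k2")
  case True
  then obtain l where l: "l \<in> L" "prime (ord l)" "ord l \<noteq> ord k1" "ord l \<noteq> ord k2"
    by blast
  have "cyc_within G (1 + 1) k1 k2"
    using K_L_adj[OF k1(1) l(1) k1(2) l(2)] cyc_adj_sym[OF K_L_adj[OF k2(1) l(1) k2(2) l(2)]] l(3,4)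
    by (intro cyc_within_trans cyc_within_adj) auto
  then show ?thesis
    by (rule cyc_within_mono) simp
next
  case False
  obtain l where l: "l \<in> L" "prime (ord l)"
    using exists_prime_ord_in_subgroup[OF finite_carrier subgroup_L L_nontrivial] by blast
  have "ord k1 \<noteq> ord k2"
    using non_exceptional False by auto
  consider "ord l = ord k1" | "ord l = ord k2"
    using False l by blast
  then show ?thesis
  proof cases
    case 1
    have "cyc_adj G l k2"
      using cyc_adj_sym[OF K_L_adj[OF k2(1) l(1) k2(2) l(2)]] 1 \<open>ord k1 \<noteq> ord k2\<close> by simp
    then have "cyc_within G (2 + 1) k1 k2"
      using K_L_cyc_within_2[OF k1 l] by (intro cyc_within_trans cyc_within_adj)
    then show ?thesis
      by (simp add: eval_nat_numeral)
  next
    case 2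
    have "cyc_adj G k1 l"
      using K_L_adj[OF k1(1) l(1) k1(2) l(2)] 2 \<open>ord k1 \<noteq> ord k2\<close> by simp
    then have "cyc_within G (1 + 2) k1 k2"
      using cyc_within_sym[OF K_L_cyc_within_2[OF k2 l]] by (intro cyc_within_trans cyc_within_adj)
    then show ?thesis
      by (simp add: eval_nat_numeral)
  qed
qed

lemma K_cyc_within_4:
  assumes "k1 \<in> K" "prime (ord k1)" "k2 \<in> K" "prime (ord k2)"
  shows "cyc_within G 4 k1 k2"
proof -
  obtain l where l: "l \<in> L" "prime (ord l)"
    using exists_prime_ord_in_subgroup[OF finite_carrier subgroup_L L_nontrivial] by blast
  have "cyc_within G (2 + 2) k1 k2"
    using K_L_cyc_within_2[OF assms(1,2) l] cyc_within_sym[OF K_L_cyc_within_2[OF assms(3,4) l]]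
    by (rule cyc_within_trans)
  then show ?thesis
    by simp
qed

lemma exists_prime_ord_in_K_or_L_within_1:
  assumes x: "x \<in> carrier G" "prime (ord x)"
  obtains P where "P \<in> K \<union> L" "prime (ord P)" "cyc_within G 1 x P"
    "x = P \<or> ord P \<noteq> ord x \<and> ord x \<in> ord ` K \<and> ord x \<in> ord ` L"
proof -
  obtain k l where k: "k \<in> K" and l: "l \<in> L" and x_eq: "x = k \<otimes> l"
    using decompose[OF x(1)] by blast
  have kG: "k \<in> carrier G" and lG: "l \<in> carrier G"
    using K_carrier[OF k] L_carrier[OF l] .
  have near_self: "cyc_within G 1 x x"
    using x by (intro cyc_within_refl cyc_vertex_if_prime_ord)
  consider "l = \<one>" | "k = \<one>" | "k \<noteq> \<one>" "l \<noteq> \<one>"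
    by blast
  then show ?thesis
  proof cases
    case 1
    then have "x \<in> K"
      using k kG x_eq by simp
    with x(2) near_self show ?thesis
      by (intro that[of x]) simp_all
  next
    case 2
    then have "x \<in> L"
      using l lG x_eq by simp
    with x(2) near_self show ?thesis
      by (intro that[of x]) simp_all
  next
    case 3
    have "ord k = ord x"
      using ord_component_eq_if_prime[OF k l] x(2) x_eq 3(1) by simp
    moreover have "ord l = ord x"
      using internal_direct_product.ord_component_eq_if_prime[OF internal_direct_product_swap l k]
        x(2) x_eq K_L_commute[OF k l] 3(2) by simp
    ultimately have orders: "ord x \<in> ord ` K" "ord x \<in> ord ` L"
      using k l by (metis image_eqI)+
    obtain z where z: "z \<in> K \<union> L" "prime (ord z)" "ord z \<noteq> ord x"
      and comm: "z \<otimes> k = k \<otimes> z" "z \<otimes> l = l \<otimes> z"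
      using exists_commuting_prime_ord_in_K_or_L[OF k l] x(2) x_eq by auto
    have zG: "z \<in> carrier G"
      using z(1) K_carrier L_carrier by auto
    have "x \<otimes> z = k \<otimes> (z \<otimes> l)"
      using x_eq kG lG zG comm(2) by (simp add: m_assoc)
    also have "\<dots> = (z \<otimes> k) \<otimes> l"
      using kG lG zG comm(1) by (simp add: m_assoc[symmetric])
    also have "\<dots> = z \<otimes> x"
      using x_eq kG lG zG by (simp add: m_assoc)
    finally have "cyc_adj G x z"
      using x zG z(2,3) by (intro cyc_adj_if_commute_prime_ord) auto
    with z orders show ?thesis
      by (intro that[of z] cyc_within_adj) auto
  qed
qed

(* The bound 3 between P and Q fails only if ord P = ord Q and every prime order in L equals it;
   then the side conditions force x = P and y = Q, and the bound 4 suffices. *)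
lemma cyc_within_5_via_K:
  assumes x: "prime (ord x)" "P \<in> K" "prime (ord P)" "cyc_within G 1 x P"
      "x = P \<or> ord P \<noteq> ord x \<and> ord x \<in> ord ` L"
    and y: "prime (ord y)" "Q \<in> K" "prime (ord Q)" "cyc_within G 1 y Q"
      "y = Q \<or> ord Q \<noteq> ord y \<and> ord y \<in> ord ` L"
  shows "cyc_within G 5 x y"
proof (cases "x = P \<and> y = Q")
  case True
  then show ?thesis
    using cyc_within_mono[OF K_cyc_within_4[OF x(2,3) y(2,3)], of 5] by simp
next
  case False
  with x(5) y(5) consider "ord P \<noteq> ord x" "ord x \<in> ord ` L" | "ord Q \<noteq> ord y" "ord y \<in> ord ` L"
    by blast
  then have "ord P \<noteq> ord Q \<or> (\<exists>l\<in>L. prime (ord l) \<and> ord l \<noteq> ord P)"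
    using x(1) y(1) by cases auto
  then have "cyc_within G 3 P Q"
    by (rule K_cyc_within_3[OF x(2,3) y(2,3)])
  then have "cyc_within G (1 + 3 + 1) x y"
    using x(4) cyc_within_sym[OF y(4)] by (intro cyc_within_trans)
  then show ?thesis
    by simp
qed

lemma prime_ord_cyc_within_5:
  assumes x: "x \<in> carrier G" "prime (ord x)" and y: "y \<in> carrier G" "prime (ord y)"
  shows "cyc_within G 5 x y"
proof -
  obtain P where P: "P \<in> K \<union> L" "prime (ord P)" "cyc_within G 1 x P"
      "x = P \<or> ord P \<noteq> ord x \<and> ord x \<in> ord ` K \<and> ord x \<in> ord ` L"
    using exists_prime_ord_in_K_or_L_within_1[OF x] by blast
  obtain Q where Q: "Q \<in> K \<union> L" "prime (ord Q)" "cyc_within G 1 y Q"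
      "y = Q \<or> ord Q \<noteq> ord y \<and> ord y \<in> ord ` K \<and> ord y \<in> ord ` L"
    using exists_prime_ord_in_K_or_L_within_1[OF y] by blast
  consider "P \<in> K" "Q \<in> K" | "P \<in> L" "Q \<in> L" | "P \<in> K" "Q \<in> L" | "P \<in> L" "Q \<in> K"
    using P(1) Q(1) by blast
  then show ?thesis
  proof cases
    case 1
    show ?thesis
      using P(4) Q(4) by (intro cyc_within_5_via_K[OF x(2) 1(1) P(2,3) _ y(2) 1(2) Q(2,3)]) auto
  next
    case 2
    show ?thesis
      using P(4) Q(4) by (intro connected_internal_direct_product.cyc_within_5_via_K[OF
            connected_internal_direct_product_swap x(2) 2(1) P(2,3) _ y(2) 2(2) Q(2,3)]) auto
  next
    case 3
    have "cyc_within G (1 + 2 + 1) x y"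
      using P(3) K_L_cyc_within_2[OF 3(1) P(2) 3(2) Q(2)] cyc_within_sym[OF Q(3)]
      by (intro cyc_within_trans)
    then show ?thesis
      by (rule cyc_within_mono) simp
  next
    case 4
    have "cyc_within G (1 + 2 + 1) x y"
      using P(3) cyc_within_sym[OF K_L_cyc_within_2[OF 4(2) Q(2) 4(1) P(2)]] cyc_within_sym[OF Q(3)]
      by (intro cyc_within_trans)
    then show ?thesis
      by (rule cyc_within_mono) simp
  qed
qed

lemma cyc_diam_le_7: "cyc_diam G \<le> 7"
proof (rule cyc_diam_le_if_within)
  obtain k where "k \<in> K" "prime (ord k)"
    using exists_prime_ord_in_subgroup[OF finite_carrier subgroup_K K_nontrivial] by blast
  then have "k \<in> cyc_vertices G"
    by (intro cyc_vertex_if_prime_ord K_carrier)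
  then show "cyc_vertices G \<noteq> {}"
    by blast
next
  fix v w
  assume "v \<in> cyc_vertices G" "w \<in> cyc_vertices G"
  then obtain x y where x: "x \<in> carrier G" "prime (ord x)" "cyc_within G 1 v x"
    and y: "y \<in> carrier G" "prime (ord y)" "cyc_within G 1 w y"
    using exists_prime_ord_within_1[OF finite_carrier] by meson
  have "cyc_within G (1 + 5 + 1) v w"
    using x(3) prime_ord_cyc_within_5[OF x(1,2) y(1,2)] cyc_within_sym[OF y(3)]
    by (intro cyc_within_trans)
  then show "cyc_within G 7 v w"
    by simp
qed

end

lemma DirProd_internal_direct_product:
  assumes G: "group G" and H: "group H"
  shows "internal_direct_product (G \<times>\<times> H) (carrier G \<times> {\<one>\<^bsub>H\<^esub>}) ({\<one>\<^bsub>G\<^esub>} \<times> carrier H)"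
proof (intro internal_direct_product.intro internal_direct_product_axioms.intro)
  interpret G: group G by (rule G)
  interpret H: group H by (rule H)
  show "group (G \<times>\<times> H)"
    using G H by (rule DirProd_group)
  show "subgroup (carrier G \<times> {\<one>\<^bsub>H\<^esub>}) (G \<times>\<times> H)"
    using G G.subgroup_self H H.triv_subgroup by (rule DirProd_subgroups)
  show "subgroup ({\<one>\<^bsub>G\<^esub>} \<times> carrier H) (G \<times>\<times> H)"
    using G G.triv_subgroup H H.subgroup_self by (rule DirProd_subgroups)
  show "k \<otimes>\<^bsub>G \<times>\<times> H\<^esub> l = l \<otimes>\<^bsub>G \<times>\<times> H\<^esub> k"
    if "k \<in> carrier G \<times> {\<one>\<^bsub>H\<^esub>}" "l \<in> {\<one>\<^bsub>G\<^esub>} \<times> carrier H" for k l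
    using that by auto
  show "(carrier G \<times> {\<one>\<^bsub>H\<^esub>}) \<inter> ({\<one>\<^bsub>G\<^esub>} \<times> carrier H) = {\<one>\<^bsub>G \<times>\<times> H\<^esub>}"
    by auto
  show "\<exists>k\<in>carrier G \<times> {\<one>\<^bsub>H\<^esub>}. \<exists>l\<in>{\<one>\<^bsub>G\<^esub>} \<times> carrier H. x = k \<otimes>\<^bsub>G \<times>\<times> H\<^esub> l"
    if xGH: "x \<in> carrier (G \<times>\<times> H)" for x
  proof -
    obtain a b where "x = (a, b)" "a \<in> carrier G" "b \<in> carrier H"
      using xGH by (cases x) auto
    then show ?thesis
      by (intro bexI[of _ "(a, \<one>\<^bsub>H\<^esub>)"] bexI[of _ "(\<one>\<^bsub>G\<^esub>, b)"]) auto
  qed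
qed

theorem theorem4p2:
  fixes G :: "('a, 'c) monoid_scheme" and H :: "('b, 'd) monoid_scheme"
  assumes "group G" and "group H"
    and "finite (carrier G)" and "finite (carrier H)"
    and "carrier G \<noteq> {\<one>\<^bsub>G\<^esub>}" and "carrier H \<noteq> {\<one>\<^bsub>H\<^esub>}"
    and "cyc_connected (G \<times>\<times> H)"
  shows "cyc_diam (G \<times>\<times> H) \<le> 7"
proof -
  interpret G: group G by fact
  interpret H: group H by fact
  interpret connected_internal_direct_product "G \<times>\<times> H" "carrier G \<times> {\<one>\<^bsub>H\<^esub>}" "{\<one>\<^bsub>G\<^esub>} \<times> carrier H"
  proof (intro connected_internal_direct_product.intro connected_internal_direct_product_axioms.intro)
    show "internal_direct_product (G \<times>\<times> H) (carrier G \<times> {\<one>\<^bsub>H\<^esub>}) ({\<one>\<^bsub>G\<^esub>} \<times> carrier H)"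
      using assms(1,2) by (rule DirProd_internal_direct_product)
    show "finite (carrier (G \<times>\<times> H))"
      using assms(3,4) by simp
    show "carrier G \<times> {\<one>\<^bsub>H\<^esub>} \<noteq> {\<one>\<^bsub>G \<times>\<times> H\<^esub>}" "{\<one>\<^bsub>G\<^esub>} \<times> carrier H \<noteq> {\<one>\<^bsub>G \<times>\<times> H\<^esub>}"
      using assms(5,6) G.one_closed H.one_closed by auto
  qed (rule assms(7))
  show ?thesis
    by (rule cyc_diam_le_7)
qed

end
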